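(* Let $D \ge 1$, let $\Sigma$ be a fixed symmetric positive definite $D \times D$ matrix, let $\Theta \in \mathbb{R}^D$, and let $X \sim {\sf N}_D(\Theta, \Sigma)$. For $x \in \mathbb{R}^D$ let $\Pi_x = {\sf N}_D(x, \Sigma)$ denote the (flat-prior) posterior distribution of the parameter given data $x$. Let $G \subset \mathbb{R}^D$ be $\Theta$-noloco, and let $H = G^c = \mathbb{R}^D \setminus G$. Then the hypothesis $H$ is afflicted by false confidence. In particular, the random variable $\Pi_X(H)$, as a function of $X \sim {\sf N}_D(\Theta,\Sigma)$, is stochastically larger than a ${\sf Unif}(0,1)$ random variable, i.e., $\mathsf{P}_\Theta\{\Pi_X(H) > t\} \ge 1 - t$ for every $t \in [0,1]$.
   Context: Model: data $X$ takes values in $\mathbb{R}^D$ and $X \sim {\sf N}_D(\Theta,\Sigma)$ with $\Sigma$ known and $\Theta \in \mathbb{R}^D$ the uncertain true parameter; $\mathsf{P}_\Theta$ denotes probability under this distribution. The precise inferential model (posterior) is $\Pi_X = {\sf N}_D(X,\Sigma)$, so $\Pi_X(H)$ is the probability that a ${\sf N}_D(X,\Sigma)$ random vector lies in $H$. A set $G \subset \mathbb{R}^D$ is called non-linear locally convex at $\vartheta$ ($\vartheta$-noloco) if: $\vartheta \in G$ lies on the boundary of $G$; $G$ has a supporting hyperplane at $\vartheta$, i.e., there is a nonzero vector $g_\vartheta \in \mathbb{R}^D$ with $G \subseteq \{\theta : g_\vartheta^\top(\theta - \vartheta) \le 0\}$; and the set $G^c \cap \{\theta : g_\vartheta^\top(\theta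 - \vartheta) \le 0\}$ (the part of the complement of $G$ lying in the half-space containing $G$ determined by the supporting hyperplane) has positive Lebesgue measure. A hypothesis $H \subseteq \mathbb{R}^D$ is afflicted by false confidence (at $\Theta$) if $\Theta \notin H$ and there exists $\alpha \in (0,1)$ such that $\mathsf{P}_\Theta\{\Pi_X(H) \ge 1-\alpha\} > \alpha$. *)

theory Defs
  imports "HOL-Analysis.Analysis"
begin

definition sym_posdef :: "real^'n^'n \<Rightarrow> bool" where
  "sym_posdef S \<longleftrightarrow> transpose S = S \<and> (\<forall>x. x \<noteq> 0 \<longrightarrow> x \<bullet> (S *v x) > 0)"

definition mvn_density :: "real^'n \<Rightarrow> real^'n^'n \<Rightarrow> real^'n \<Rightarrow> real" where
  "mvn_density mu S x =
     exp (- (1/2) * ((x - mu) \<bullet> (matrix_inv S *v (x - mu))))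
     / sqrt ((2 * pi) ^ CARD('n) * det S)"

definition mvn :: "real^'n \<Rightarrow> real^'n^'n \<Rightarrow> (real^'n) measure" where
  "mvn mu S = density lebesgue (\<lambda>x. ennreal (mvn_density mu S x))"

definition noloco :: "(real^'n) set \<Rightarrow> real^'n \<Rightarrow> bool" where
  "noloco G th \<longleftrightarrow> th \<in> G \<and> th \<in> frontier G \<and>
     (\<exists>g::real^'n. g \<noteq> 0 \<and> G \<subseteq> {t. g \<bullet> (t - th) \<le> 0} \<and>
        emeasure lebesgue ((- G) \<inter> {t. g \<bullet> (t - th) \<le> 0}) > 0)"

definition false_confidence :: "real^'n^'n \<Rightarrow> real^'n \<Rightarrow> (real^'n) set \<Rightarrow> bool" where
  "false_confidence S Th H \<longleftrightarrow> Th \<notin> H \<and>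
     (\<exists>a. 0 < a \<and> a < 1 \<and>
        measure (mvn Th S) {x. measure (mvn x S) H \<ge> 1 - a} > a)"

end

theory Submission
  imports Defs "HOL-Probability.Probability"
begin

(* Let g be the normal of a supporting hyperplane of G at Theta and H = {y. 0 < g . (y - Theta)}
   the open half-space beyond it, so H is contained in -G.  The normal density is point-symmetric,
   hence Pi_x(H) = P_Theta(g . X < g . x): Pi_X(H) is the CDF of g . X evaluated at g . X and thus
   uniform on (0,1).  Since -G - H has positive Lebesgue measure and normal densities are positive,
   Pi_X(-G) > Pi_X(H) everywhere, so Pi_X(-G) is stochastically larger than Unif(0,1); and strict
   domination yields a rational u with P_Theta{Pi_X(H) < u <= Pi_X(-G)} > 0, which is false
   confidence at level 1 - u.  That N(x, Sigma) is a probability measure follows from the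
   substitution z = A y with A^T Sigma^-1 A = I. *)

section \<open>Linear change of variables for Lebesgue measure\<close>

lemma borel_measurable_linear:
  fixes f :: "'a::euclidean_space \<Rightarrow> 'b::euclidean_space"
  assumes "linear f"
  shows "f \<in> borel_measurable borel"
  using assms by (simp add: borel_measurable_continuous_onI linear_continuous_on linear_linear)

lemma lborel_eq_density_distr_linear:
  fixes f :: "'a::euclidean_space \<Rightarrow> 'a"
  assumes f: "linear f" "inj f"
    and scale: "\<And>a b. measure lebesgue (f ` cbox a b) = m * measure lebesgue (cbox a b)"
  shows "lborel = density (distr lborel borel f) (\<lambda>_. ennreal m)"
proof (rule lborel_eqI)
  fix l u :: 'a
  assume "\<And>b. b \<in> Basis \<Longrightarrow> l \<bullet> b \<le> u \<bullet> b"
  have "0 \<le> measure lebesgue (f ` cbox 0 One)"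
    by (rule measure_nonneg)
  then have "0 \<le> m"
    by (simp add: scale)
  have [measurable]: "f \<in> borel_measurable borel"
    using f(1) by (rule borel_measurable_linear)
  obtain g where g: "linear g" "g \<circ> f = id"
    using linear_injective_left_inverse[OF f] by blast
  have gf: "g (f x) = x" for x
    using g(2) by (simp add: fun_eq_iff)
  have "surj f"
    using f linear_injective_imp_surjective by blast
  then have fg: "f (g y) = y" for y
    using gf by (metis surjD)
  have "g ` box l u \<in> lmeasurable"
  proof (rule lmeasurable_open)
    show "bounded (g ` box l u)"
      using g(1) by (simp add: bounded_linear_image linear_linear)
    have "surj g"
      using gf by (metis surjI)
    then show "open (g ` box l u)"
      using g(1) by (intro open_surjective_linear_image open_box)
  qed
  then have "m * measure lebesgue (g ` box l u) = measure lebesgue (f ` g ` box l u)"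
    using measure_linear_sufficient[OF f(1) _ scale] by blast
  also have "f ` g ` box l u = box l u"
    using fg by (force simp: image_iff)
  finally have measure_box: "m * measure lebesgue (g ` box l u) = measure lebesgue (box l u)" .
  have preimage: "f -` box l u = g ` box l u"
    using gf fg by (auto simp: image_iff) metis
  have "f -` box l u \<in> sets borel"
    using measurable_sets[of f borel borel "box l u"] by simp
  then have "emeasure (density (distr lborel borel f) (\<lambda>_. ennreal m)) (box l u)
      = ennreal m * emeasure lebesgue (g ` box l u)"
    by (simp add: emeasure_density nn_integral_cmult_indicator emeasure_distr emeasure_completion
        flip: preimage)
  also have "\<dots> = emeasure lborel (box l u)"
    using \<open>g ` box l u \<in> lmeasurable\<close> \<open>0 \<le> m\<close> measure_box
    by (simp add: emeasure_eq_measure2 measure_completion flip: ennreal_mult)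
  finally show "emeasure (density (distr lborel borel f) (\<lambda>_. ennreal m)) (box l u)
      = (\<Prod>b\<in>Basis. (u - l) \<bullet> b)"
    using \<open>\<And>b. b \<in> Basis \<Longrightarrow> l \<bullet> b \<le> u \<bullet> b\<close> by (simp add: emeasure_lborel_box)
qed simp

lemma nn_integral_lborel_linear_scaling:
  fixes f :: "'a::euclidean_space \<Rightarrow> 'a"
  assumes f: "linear f" "inj f"
    and scale: "\<And>a b. measure lebesgue (f ` cbox a b) = m * measure lebesgue (cbox a b)"
    and h: "h \<in> borel_measurable borel"
  shows "(\<integral>\<^sup>+x. h x \<partial>lborel) = ennreal m * (\<integral>\<^sup>+y. h (f y) \<partial>lborel)"
proof -
  have [measurable]: "f \<in> borel_measurable borel"
    using f(1) by (rule borel_measurable_linear)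
  have "(\<integral>\<^sup>+x. h x \<partial>lborel) = (\<integral>\<^sup>+x. h x \<partial>density (distr lborel borel f) (\<lambda>_. ennreal m))"
    by (subst (1) lborel_eq_density_distr_linear[OF f scale]) (rule refl)
  also have "\<dots> = (\<integral>\<^sup>+x. ennreal m * h x \<partial>distr lborel borel f)"
    using h by (simp add: nn_integral_density)
  also have "\<dots> = ennreal m * (\<integral>\<^sup>+y. h (f y) \<partial>lborel)"
    using h by (simp add: nn_integral_distr nn_integral_cmult)
  finally show ?thesis .
qed

lemma measure_shear_cbox:
  fixes a b :: "real^'n"
  assumes "m \<noteq> n"
  shows "measure lebesgue ((\<lambda>x. \<chi> i. if i = m then x$m + x$n else x$i) ` cbox a b)
    = measure lebesgue (cbox a b)"
proof (cases "cbox a b = {}")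
  case False
  let ?f = "\<lambda>x::real^'n. \<chi> i. if i = m then x$m + x$n else x$i"
  \<comment> \<open>measure_shear_interval needs a nonnegative n-th corner coordinate, so translate first\<close>
  define v :: "real^'n" where "v = axis n (- a$n)"
  have "?f ` cbox (v + a) (v + b) = (+) (?f v) ` ?f ` cbox a b"
    unfolding cbox_translation image_image by (rule image_cong) (auto simp: vec_eq_iff)
  then have "measure lebesgue (?f ` cbox a b) = measure lebesgue (?f ` cbox (v + a) (v + b))"
    by (simp add: measure_translation)
  also have "\<dots> = measure lebesgue (cbox (v + a) (v + b))"
    using assms False by (intro measure_shear_interval) (auto simp: v_def cbox_translation)
  also have "\<dots> = measure lebesgue (cbox a b)"
    by (simp add: cbox_translation measure_translation)
  finally show ?thesis .
qed simp

lemma measure_swap_cbox: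
  fixes a b :: "real^'n"
  shows "measure lebesgue ((\<lambda>x. \<chi> i. x $ Transposition.transpose m n i) ` cbox a b)
    = measure lebesgue (cbox a b)"
proof (cases "cbox a b = {}")
  case False
  let ?\<tau> = "Transposition.transpose m n"
  let ?f = "\<lambda>x::real^'n. \<chi> i. x $ ?\<tau> i"
  have involution: "?f (?f x) = x" for x
    by (simp add: vec_eq_iff)
  have all_swap: "(\<forall>i. P i) \<longleftrightarrow> (\<forall>i. P (?\<tau> i))" for P
    by (metis transpose_involutory)
  have mem: "?f y \<in> cbox a b \<longleftrightarrow> y \<in> cbox (?f a) (?f b)" for y
    using all_swap[of "\<lambda>i. a$i \<le> y $ ?\<tau> i \<and> y $ ?\<tau> i \<le> b$i"] by (simp add: mem_box_cart)
  have image: "?f ` cbox a b = cbox (?f a) (?f b)"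
  proof (intro set_eqI iffI)
    show "y \<in> cbox (?f a) (?f b)" if "y \<in> ?f ` cbox a b" for y
      using that by (auto simp: involution mem[symmetric])
    show "y \<in> ?f ` cbox a b" if "y \<in> cbox (?f a) (?f b)" for y
      using that by (intro image_eqI[of y _ "?f y"]) (simp_all add: involution mem)
  qed
  then have ne: "cbox (?f a) (?f b) \<noteq> {}"
    using False by blast
  have "measure lebesgue (?f ` cbox a b) = (\<Prod>i\<in>UNIV. ?f b $ i - ?f a $ i)"
    unfolding image measure_completion[OF cbox_borel[unfolded sets_lborel[symmetric]]]
    by (rule content_cbox_cart[OF ne])
  also have "\<dots> = (\<Prod>i\<in>UNIV. b $ i - a $ i)"
    by (rule prod.reindex_bij_witness[of _ ?\<tau> ?\<tau>]) simp_all
  also have "\<dots> = measure lebesgue (cbox a b)"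
    unfolding measure_completion[OF cbox_borel[unfolded sets_lborel[symmetric]]]
    by (rule content_cbox_cart[OF False, symmetric])
  finally show ?thesis .
qed simp

definition lborel_change_of_vars :: "(real^'n \<Rightarrow> real^'n) \<Rightarrow> bool" where
  "lborel_change_of_vars f \<longleftrightarrow> (\<forall>h \<in> borel_measurable borel.
    (\<integral>\<^sup>+x. h x \<partial>lborel) = ennreal \<bar>det (matrix f)\<bar> * (\<integral>\<^sup>+y. h (f y) \<partial>lborel))"

lemma lborel_change_of_vars_if_scales_cbox:
  fixes f :: "real^'n \<Rightarrow> real^'n"
  assumes f: "linear f" "det (matrix f) \<noteq> 0"
    and scale: "\<And>a b. measure lebesgue (f ` cbox a b) = \<bar>det (matrix f)\<bar> * measure lebesgue (cbox a b)"
  shows "lborel_change_of_vars f"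
  unfolding lborel_change_of_vars_def
  using f det_nz_iff_inj nn_integral_lborel_linear_scaling[OF f(1) _ scale] by blast

lemma lborel_change_of_vars_comp:
  fixes f g :: "real^'n \<Rightarrow> real^'n"
  assumes "linear f" "linear g" "lborel_change_of_vars f" "lborel_change_of_vars g"
  shows "lborel_change_of_vars (f \<circ> g)"
  unfolding lborel_change_of_vars_def
proof
  fix h :: "real^'n \<Rightarrow> ennreal"
  assume h[measurable]: "h \<in> borel_measurable borel"
  have [measurable]: "f \<in> borel_measurable borel"
    using \<open>linear f\<close> by (rule borel_measurable_linear)
  have hf: "(\<lambda>y. h (f y)) \<in> borel_measurable borel"
    by measurable
  have "(\<integral>\<^sup>+x. h x \<partial>lborel) = ennreal \<bar>det (matrix f)\<bar> * (\<integral>\<^sup>+y. h (f y) \<partial>lborel)"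
    using bspec[OF assms(3)[unfolded lborel_change_of_vars_def] h] .
  also have "(\<integral>\<^sup>+y. h (f y) \<partial>lborel) = ennreal \<bar>det (matrix g)\<bar> * (\<integral>\<^sup>+y. h (f (g y)) \<partial>lborel)"
    using bspec[OF assms(4)[unfolded lborel_change_of_vars_def] hf] by simp
  finally show "(\<integral>\<^sup>+x. h x \<partial>lborel)
      = ennreal \<bar>det (matrix (f \<circ> g))\<bar> * (\<integral>\<^sup>+y. h ((f \<circ> g) y) \<partial>lborel)"
    by (simp add: matrix_compose[OF \<open>linear g\<close> \<open>linear f\<close>] det_mul abs_mult ennreal_mult mult.assoc)
qed

lemma det_matrix_stretch: "det (matrix (\<lambda>x::real^'n. \<chi> i. c i * x $ i)) = prod c UNIV"
  by (simp add: matrix_def axis_def det_diagonal)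

lemma abs_det_matrix_swap:
  "\<bar>det (matrix (\<lambda>x::real^'n. \<chi> i. x $ Transposition.transpose m n i))\<bar> = 1"
proof -
  have "matrix (\<lambda>x::real^'n. \<chi> i. x $ Transposition.transpose m n i)
      = (\<chi> i. mat 1 $ Transposition.transpose m n i :: real^'n^'n)"
    by (simp add: matrix_def mat_def axis_def vec_eq_iff)
  moreover have "det (\<chi> i. mat 1 $ Transposition.transpose m n i :: real^'n^'n)
      = of_int (sign (Transposition.transpose m n))"
    using det_permute_rows[OF permutes_swap_id[of m UNIV n], where A="mat 1 :: real^'n^'n"] by simp
  ultimately show ?thesis
    by (simp add: sign_swap_id)
qed

lemma det_matrix_shear:
  assumes "m \<noteq> n"
  shows "det (matrix (\<lambda>x::real^'n. \<chi> i. if i = m then x $ m + x $ n else x $ i)) = 1"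
proof -
  have "matrix (\<lambda>x::real^'n. \<chi> i. if i = m then x $ m + x $ n else x $ i)
      = (\<chi> k. if k = m then row m (mat 1) + 1 *s row n (mat 1) else row k (mat 1) :: real^'n^'n)"
    by (auto simp: matrix_def vec_eq_iff row_def mat_def axis_def)
  then show ?thesis
    using det_row_operation[OF assms, of "mat 1 :: real^'n^'n" 1] by simp
qed

(* Unlike measure_linear_image in Change_Of_Vars, this needs no well-ordering of the index type. *)
lemma nn_integral_lborel_linear:
  fixes f :: "real^'n \<Rightarrow> real^'n"
  assumes "linear f" "det (matrix f) \<noteq> 0" "h \<in> borel_measurable borel"
  shows "(\<integral>\<^sup>+x. h x \<partial>lborel) = ennreal \<bar>det (matrix f)\<bar> * (\<integral>\<^sup>+y. h (f y) \<partial>lborel)"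
proof -
  have "det (matrix f) \<noteq> 0 \<longrightarrow> lborel_change_of_vars f"
  proof (induction rule: induct_linear_elementary[OF \<open>linear f\<close>])
    case (1 f g)
    have "det (matrix (f \<circ> g)) = det (matrix f) * det (matrix g)"
      by (simp add: matrix_compose[OF \<open>linear g\<close> \<open>linear f\<close>] det_mul)
    with 1 show ?case
      by (simp add: lborel_change_of_vars_comp del: o_apply)
  next
    case (2 f i)
    then have "row i (matrix f) = 0"
      by (simp add: row_def matrix_def vec_eq_iff)
    then show ?case
      by (simp add: det_zero_row)
  next
    case (3 c)
    show ?case
      by (auto intro!: lborel_change_of_vars_if_scales_cbox linearI
          simp: det_matrix_stretch vec_eq_iff algebra_simps measure_stretch)
  next
    case (4 m n)
    show ?case
      by (auto intro!: lborel_change_of_vars_if_scales_cbox linearI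
          simp: abs_det_matrix_swap vec_eq_iff measure_swap_cbox)
  next
    case (5 m n)
    then show ?case
      by (auto intro!: lborel_change_of_vars_if_scales_cbox linearI
          simp: det_matrix_shear vec_eq_iff algebra_simps measure_shear_cbox)
  qed
  with assms show ?thesis
    by (simp add: lborel_change_of_vars_def)
qed

section \<open>Positive definite matrices and Gaussian integrals\<close>

lemma inner_matrix_vector_sym:
  fixes Q :: "real^'n^'n"
  assumes "transpose Q = Q"
  shows "x \<bullet> (Q *v y) = (Q *v x) \<bullet> y"
  by (metis assms dot_lmul_matrix transpose_transpose vector_transpose_matrix)

lemma ex_nonzero_orthogonal_matrix_image:
  fixes Q :: "real^'n^'n" and u :: "'n \<Rightarrow> real^'n"
  assumes "transpose Q = Q" and "card I < CARD('n)"
  obtains x where "x \<noteq> 0" "\<And>j. j \<in> I \<Longrightarrow> x \<bullet> (Q *v u j) = 0 \<and> u j \<bullet> (Q *v x) = 0"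
proof -
  have "dim ((\<lambda>j. Q *v u j) ` I) \<le> card ((\<lambda>j. Q *v u j) ` I)"
    by (rule dim_le_card) (auto intro: span_base)
  also have "\<dots> < DIM(real^'n)"
    using assms(2) card_image_le[of I "\<lambda>j. Q *v u j"] by simp
  finally obtain x :: "real^'n" where "x \<noteq> 0"
    and orth: "\<And>y. y \<in> span ((\<lambda>j. Q *v u j) ` I) \<Longrightarrow> orthogonal x y"
    by (rule orthogonal_to_subspace_exists) blast
  have "x \<bullet> (Q *v u j) = 0 \<and> u j \<bullet> (Q *v x) = 0" if "j \<in> I" for j
    using orth[of "Q *v u j"] that inner_matrix_vector_sym[OF assms(1), of "u j" x]
    by (auto simp: span_base orthogonal_def inner_commute)
  with \<open>x \<noteq> 0\<close> show ?thesis
    by (rule that)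
qed

lemma sym_posdef_orthonormal_vectors:
  fixes Q :: "real^'n^'n"
  assumes Q: "sym_posdef Q"
  shows "\<exists>u::'n \<Rightarrow> real^'n. \<forall>i j. u i \<bullet> (Q *v u j) = (if i = j then 1 else 0)"
proof -
  have sym: "transpose Q = Q" and pd: "\<And>x. x \<noteq> 0 \<Longrightarrow> x \<bullet> (Q *v x) > 0"
    using Q by (auto simp: sym_posdef_def)
  have "\<exists>u::'n \<Rightarrow> real^'n. \<forall>i\<in>I. \<forall>j\<in>I. u i \<bullet> (Q *v u j) = (if i = j then 1 else 0)" for I
  proof (induction I rule: finite_induct[OF finite])
    case 1
    then show ?case
      by simp
  next
    case (2 i I)
    then obtain u where u: "\<forall>a\<in>I. \<forall>b\<in>I. u a \<bullet> (Q *v u b) = (if a = b then 1 else 0)"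
      by blast
    have "card (insert i I) \<le> CARD('n)"
      by (rule card_mono) auto
    with 2 obtain x where "x \<noteq> 0" and orth: "\<And>j. j \<in> I \<Longrightarrow> x \<bullet> (Q *v u j) = 0 \<and> u j \<bullet> (Q *v x) = 0"
      using ex_nonzero_orthogonal_matrix_image[OF sym, of I u] by auto
    define v where "v = (1 / sqrt (x \<bullet> (Q *v x))) *\<^sub>R x"
    have "v \<bullet> (Q *v v) = 1"
      using pd[OF \<open>x \<noteq> 0\<close>] by (simp add: v_def matrix_vector_mult_scaleR power2_eq_square[symmetric])
    moreover have "v \<bullet> (Q *v u j) = 0" "u j \<bullet> (Q *v v) = 0" if "j \<in> I" for j
      using orth[OF that] by (simp_all add: v_def matrix_vector_mult_scaleR)
    ultimately show ?case
      using u \<open>i \<notin> I\<close> by (intro exI[of _ "u(i := v)"]) auto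
  qed
  from this[of UNIV] show ?thesis
    by simp
qed

lemma sym_posdef_congruent_mat_1:
  fixes Q :: "real^'n^'n"
  assumes "sym_posdef Q"
  obtains A :: "real^'n^'n" where "transpose A ** Q ** A = mat 1"
proof -
  obtain u :: "'n \<Rightarrow> real^'n" where u: "\<And>i j. u i \<bullet> (Q *v u j) = (if i = j then 1 else 0)"
    using sym_posdef_orthonormal_vectors[OF assms] by blast
  define A :: "real^'n^'n" where "A = (\<chi> k i. u i $ k)"
  have column: "A *v axis j 1 = u j" for j
    by (simp add: matrix_vector_mult_basis column_def A_def)
  have "(transpose A ** Q ** A) $ i $ j = axis i 1 \<bullet> ((transpose A ** Q ** A) *v axis j 1)" for i j
    by (simp add: matrix_vector_mult_basis column_def inner_axis')
  also have "\<dots> i j = axis i 1 \<bullet> (transpose A *v (Q *v (A *v axis j 1)))" for i j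
    by (simp add: matrix_vector_mul_assoc matrix_mul_assoc)
  also have "\<dots> i j = (A *v axis i 1) \<bullet> (Q *v (A *v axis j 1))" for i j
    by (metis dot_lmul_matrix vector_transpose_matrix)
  finally have "(transpose A ** Q ** A) $ i $ j = (if i = j then 1 else 0)" for i j
    by (simp add: column u)
  then have "transpose A ** Q ** A = mat 1"
    by (simp add: vec_eq_iff mat_def)
  then show ?thesis
    by (rule that)
qed

lemma det_congruent_mat_1:
  fixes A Q :: "real^'n^'n"
  assumes "transpose A ** Q ** A = mat 1"
  shows "det A ^ 2 * det Q = 1"
  using arg_cong[OF assms, of det] by (simp add: det_mul power2_eq_square mult_ac)

lemma sym_posdef_det_pos:
  fixes Q :: "real^'n^'n"
  assumes "sym_posdef Q"
  shows "0 < det Q"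
proof -
  obtain A :: "real^'n^'n" where "transpose A ** Q ** A = mat 1"
    using sym_posdef_congruent_mat_1[OF assms] .
  then have "det A ^ 2 * det Q = 1"
    by (rule det_congruent_mat_1)
  then show ?thesis
    by (metis not_le mult_nonneg_nonpos zero_le_power2 zero_less_one)
qed

lemma sym_posdef_matrix_inv:
  fixes S :: "real^'n^'n"
  assumes S: "sym_posdef S"
  shows "S ** matrix_inv S = mat 1" "sym_posdef (matrix_inv S)"
proof -
  have sym: "transpose S = S" and pd: "\<And>x. x \<noteq> 0 \<Longrightarrow> x \<bullet> (S *v x) > 0"
    using S by (auto simp: sym_posdef_def)
  have "invertible S"
    using sym_posdef_det_pos[OF S] by (simp add: invertible_det_nz)
  then have "S ** matrix_inv S = mat 1 \<and> matrix_inv S ** S = mat 1"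
    unfolding matrix_inv_def invertible_def by (rule someI_ex)
  then show right: "S ** matrix_inv S = mat 1"
    by auto
  let ?M = "matrix_inv S"
  have "transpose ?M = transpose ?M ** (S ** ?M)"
    by (simp add: right)
  also have "\<dots> = transpose (S ** ?M) ** ?M"
    by (simp add: matrix_mul_assoc matrix_transpose_mul sym)
  finally have "transpose ?M = ?M"
    by (simp add: right)
  moreover have "x \<bullet> (?M *v x) > 0" if "x \<noteq> 0" for x
  proof -
    have "S *v (?M *v x) = x"
      by (simp add: matrix_vector_mul_assoc right)
    then have "?M *v x \<noteq> 0"
      using that by auto
    then have "0 < (?M *v x) \<bullet> (S *v (?M *v x))"
      by (rule pd)
    then show ?thesis
      using \<open>S *v (?M *v x) = x\<close> by (simp add: inner_commute)
  qed
  ultimately show "sym_posdef ?M"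
    by (simp add: sym_posdef_def)
qed

lemma det_matrix_inv_sym_posdef:
  fixes S :: "real^'n^'n"
  assumes "sym_posdef S"
  shows "det (matrix_inv S) = 1 / det S"
  using arg_cong[OF sym_posdef_matrix_inv(1)[OF assms], of det] sym_posdef_det_pos[OF assms]
  by (simp add: det_mul field_simps)

lemma borel_measurable_matrix_vector_mult[measurable (raw)]:
  assumes "f \<in> borel_measurable M"
  shows "(\<lambda>x. (A :: real^'n^'m) *v f x) \<in> borel_measurable M"
  using measurable_compose[OF assms borel_measurable_linear[OF matrix_vector_mul_linear[of A]]] .

lemma nn_integral_exp_neg_square_half:
  "(\<integral>\<^sup>+x. ennreal (exp (- x\<^sup>2 / 2)) \<partial>lborel) = ennreal (sqrt (2 * pi))"
proof -
  have "exp (- x\<^sup>2 / 2) = sqrt (2 * pi) * std_normal_density x" for x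
    by (simp add: std_normal_density_def)
  then have "(\<integral>\<^sup>+x. ennreal (exp (- x\<^sup>2 / 2)) \<partial>lborel)
      = ennreal (sqrt (2 * pi)) * (\<integral>\<^sup>+x. ennreal (std_normal_density x) \<partial>lborel)"
    by (simp add: ennreal_mult nn_integral_cmult)
  also have "(\<integral>\<^sup>+x. ennreal (std_normal_density x) \<partial>lborel) = 1"
    by (simp add: nn_integral_eq_integral)
  finally show ?thesis
    by simp
qed

lemma nn_integral_exp_neg_inner_half:
  "(\<integral>\<^sup>+y. ennreal (exp (- (y \<bullet> y) / 2)) \<partial>(lborel :: 'a::euclidean_space measure))
    = ennreal (sqrt (2 * pi) ^ DIM('a))"
proof -
  have "ennreal (exp (- (y \<bullet> y) / 2)) = (\<Prod>b\<in>Basis. ennreal (exp (- (y \<bullet> b)\<^sup>2 / 2)))" for y :: 'a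
  proof -
    have "- (y \<bullet> y) / 2 = (\<Sum>b\<in>Basis. - (y \<bullet> b)\<^sup>2 / 2)"
      by (subst euclidean_inner) (simp add: power2_eq_square sum_negf sum_divide_distrib)
    then show ?thesis
      by (simp add: exp_sum prod_ennreal)
  qed
  then have "(\<integral>\<^sup>+y. ennreal (exp (- (y \<bullet> y) / 2)) \<partial>(lborel :: 'a measure))
      = (\<integral>\<^sup>+y. (\<Prod>b\<in>Basis. (\<lambda>_ x. ennreal (exp (- x\<^sup>2 / 2))) b (y \<bullet> b)) \<partial>(lborel :: 'a measure))"
    by simp
  also have "\<dots> = (\<Prod>b\<in>(Basis :: 'a set). \<integral>\<^sup>+x. ennreal (exp (- x\<^sup>2 / 2)) \<partial>lborel)"
    by (rule nn_integral_lborel_prod) auto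
  also have "\<dots> = ennreal (sqrt (2 * pi)) ^ DIM('a)"
    by (simp only: nn_integral_exp_neg_square_half prod_constant)
  finally show ?thesis
    by (simp add: ennreal_power)
qed

lemma nn_integral_exp_neg_quadratic_form:
  fixes Q :: "real^'n^'n"
  assumes "sym_posdef Q"
  shows "(\<integral>\<^sup>+z. ennreal (exp (- (1/2) * (z \<bullet> (Q *v z)))) \<partial>lborel)
    = ennreal (sqrt ((2 * pi) ^ CARD('n) / det Q))"
proof -
  obtain A :: "real^'n^'n" where A: "transpose A ** Q ** A = mat 1"
    using sym_posdef_congruent_mat_1[OF assms] .
  have detA: "det A ^ 2 * det Q = 1"
    using A by (rule det_congruent_mat_1)
  then have "det A \<noteq> 0"
    by auto
  have "\<bar>det A\<bar> = sqrt (1 / det Q)"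
    using detA by (metis nonzero_eq_divide_eq real_sqrt_abs zero_neq_one mult_zero_right)
  have quadratic: "(A *v y) \<bullet> (Q *v (A *v y)) = y \<bullet> y" for y
    by (metis A dot_lmul_matrix matrix_vector_mul_assoc matrix_vector_mul_lid vector_transpose_matrix)
  have "(\<integral>\<^sup>+z. ennreal (exp (- (1/2) * (z \<bullet> (Q *v z)))) \<partial>lborel)
      = ennreal \<bar>det A\<bar> * (\<integral>\<^sup>+y. ennreal (exp (- (1/2) * ((A *v y) \<bullet> (Q *v (A *v y))))) \<partial>lborel)"
    using nn_integral_lborel_linear[of "(*v) A" "\<lambda>z. ennreal (exp (- (1/2) * (z \<bullet> (Q *v z))))"]
      \<open>det A \<noteq> 0\<close> by simp
  also have "\<dots> = ennreal (sqrt (1 / det Q)) * ennreal (sqrt (2 * pi) ^ CARD('n))"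
    using nn_integral_exp_neg_inner_half[where 'a="real^'n"]
    by (simp add: quadratic \<open>\<bar>det A\<bar> = sqrt (1 / det Q)\<close>)
  also have "\<dots> = ennreal (sqrt ((2 * pi) ^ CARD('n) / det Q))"
    using sym_posdef_det_pos[OF assms]
    by (simp add: ennreal_mult[symmetric] real_sqrt_divide real_sqrt_mult real_sqrt_power power_mult_distrib)
  finally show ?thesis .
qed

section \<open>The multivariate normal distribution\<close>

lemma borel_measurable_mvn_density[measurable]:
  "(\<lambda>(x, z). mvn_density x S z) \<in> borel_measurable (borel \<Otimes>\<^sub>M borel)"
  unfolding mvn_density_def by measurable

lemma borel_measurable_mvn_density_lebesgue[measurable]:
  "(\<lambda>z. mvn_density c S z) \<in> borel_measurable lebesgue"
  by (rule measurable_completion) measurable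

lemma mvn_density_pos:
  assumes "sym_posdef S"
  shows "0 < mvn_density c S z"
  using sym_posdef_det_pos[OF assms] by (simp add: mvn_density_def)

lemma mvn_density_reflect: "mvn_density x S (x + c - y) = mvn_density c S y"
proof -
  have "x + c - y - x = - (y - c)"
    by simp
  moreover have "matrix_inv S *v (- (y - c)) = - (matrix_inv S *v (y - c))"
    by (rule linear_neg[OF matrix_vector_mul_linear])
  ultimately show ?thesis
    unfolding mvn_density_def by (simp only: inner_minus_left inner_minus_right minus_minus)
qed

lemma nn_integral_mvn_density:
  fixes S :: "real^'n^'n"
  assumes "sym_posdef S"
  shows "(\<integral>\<^sup>+z. ennreal (mvn_density c S z) \<partial>lborel) = 1"
proof -
  define K where "K = sqrt ((2 * pi) ^ CARD('n) * det S)"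
  have "0 < K"
    using sym_posdef_det_pos[OF assms] by (simp add: K_def)
  have density: "ennreal (mvn_density c S (c + w))
      = ennreal (exp (- (1/2) * (w \<bullet> (matrix_inv S *v w)))) * ennreal (1 / K)" for w
    using \<open>0 < K\<close> by (simp add: mvn_density_def K_def flip: ennreal_mult)
  have "(\<integral>\<^sup>+w. ennreal (mvn_density c S (c + w)) \<partial>lborel)
      = (\<integral>\<^sup>+z. ennreal (mvn_density c S z) \<partial>distr lborel borel ((+) c))"
    by (simp add: nn_integral_distr)
  then have "(\<integral>\<^sup>+z. ennreal (mvn_density c S z) \<partial>lborel)
      = (\<integral>\<^sup>+w. ennreal (mvn_density c S (c + w)) \<partial>lborel)"
    by (simp only: lborel_distr_plus)
  also have "\<dots> = (\<integral>\<^sup>+w. ennreal (exp (- (1/2) * (w \<bullet> (matrix_inv S *v w)))) \<partial>lborel) * ennreal (1 / K)"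
    unfolding density by (rule nn_integral_multc) measurable
  also have "\<dots> = ennreal (sqrt ((2 * pi) ^ CARD('n) / det (matrix_inv S))) * ennreal (1 / K)"
    by (simp only: nn_integral_exp_neg_quadratic_form sym_posdef_matrix_inv(2)[OF assms])
  also have "sqrt ((2 * pi) ^ CARD('n) / det (matrix_inv S)) = K"
    by (simp add: K_def det_matrix_inv_sym_posdef[OF assms])
  finally show ?thesis
    using \<open>0 < K\<close> by (simp flip: ennreal_mult)
qed

lemma sets_mvn[simp, measurable_cong]: "sets (mvn c S) = sets lebesgue"
  by (simp add: mvn_def)

lemma space_mvn[simp]: "space (mvn c S) = UNIV"
  by (simp add: mvn_def)

lemma measurable_mvn[simp]: "measurable (mvn c S) M = measurable lebesgue M"
  by (rule measurable_cong_sets) simp_all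

lemma emeasure_mvn:
  assumes "A \<in> sets borel"
  shows "emeasure (mvn c S) A = (\<integral>\<^sup>+z. ennreal (mvn_density c S z) * indicator A z \<partial>lborel)"
proof -
  have "emeasure (mvn c S) A = (\<integral>\<^sup>+z. ennreal (mvn_density c S z) * indicator A z \<partial>lebesgue)"
    using assms by (simp add: mvn_def emeasure_density)
  also have "\<dots> = (\<integral>\<^sup>+z. ennreal (mvn_density c S z) * indicator A z \<partial>lborel)"
    using assms by (intro nn_integral_completion) measurable
  finally show ?thesis .
qed

lemma prob_space_mvn:
  assumes "sym_posdef S"
  shows "prob_space (mvn c S)"
proof
  show "emeasure (mvn c S) (space (mvn c S)) = 1"
    using emeasure_mvn[of UNIV c S] nn_integral_mvn_density[OF assms, of c] by simp
qed

lemma null_sets_mvn: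
  assumes "N \<in> null_sets lebesgue"
  shows "N \<in> null_sets (mvn c S)"
  using assms absolutely_continuousI_density[of "\<lambda>z. ennreal (mvn_density c S z)" lebesgue]
  by (auto simp: mvn_def absolutely_continuous_def)

lemma emeasure_mvn_pos:
  assumes "sym_posdef S" and A: "A \<in> sets lebesgue" and "0 < emeasure lebesgue A"
  shows "0 < emeasure (mvn c S) A"
proof (rule ccontr)
  assume "\<not> 0 < emeasure (mvn c S) A"
  then have "(\<integral>\<^sup>+z. ennreal (mvn_density c S z) * indicator A z \<partial>lebesgue) = 0"
    using A by (simp add: mvn_def emeasure_density)
  then have "AE z in lebesgue. ennreal (mvn_density c S z) * indicator A z = 0"
    using A by (subst (asm) nn_integral_0_iff_AE) (auto intro: measurable_completion)
  then have "AE z in lebesgue. z \<notin> A"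
    by eventually_elim (use mvn_density_pos[OF assms(1), of c] in \<open>auto simp: indicator_def less_le\<close>)
  then show False
    using A assms(3) by (simp add: AE_iff_null_sets null_setsD1)
qed

lemma measure_mvn_strict_mono:
  assumes "sym_posdef S" "A \<subseteq> B" "A \<in> sets lebesgue" "B \<in> sets lebesgue"
    and "0 < emeasure lebesgue (B - A)"
  shows "measure (mvn c S) A < measure (mvn c S) B"
proof -
  interpret prob_space "mvn c S"
    using prob_space_mvn[OF assms(1)] .
  have "0 < emeasure (mvn c S) (B - A)"
    using assms by (intro emeasure_mvn_pos) auto
  then have "0 < measure (mvn c S) (B - A)"
    by (simp add: emeasure_eq_measure)
  moreover have "measure (mvn c S) (B - A) = measure (mvn c S) B - measure (mvn c S) A"
    using assms by (intro finite_measure_Diff) auto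
  ultimately show ?thesis
    by simp
qed

lemma emeasure_mvn_reflect:
  fixes S :: "real^'n^'n"
  assumes [measurable]: "E \<in> sets borel"
  shows "emeasure (mvn x S) E = emeasure (mvn c S) ((\<lambda>y. x + c - y) -` E)"
proof -
  have "emeasure (mvn x S) E = (\<integral>\<^sup>+z. ennreal (mvn_density x S z) * indicator E z \<partial>lborel)"
    by (rule emeasure_mvn) fact
  also have "\<dots> = (\<integral>\<^sup>+y. ennreal (mvn_density x S (x + c - y)) * indicator E (x + c - y) \<partial>lborel)"
  proof -
    have "distr lborel borel ((-) (x + c)) = (lborel :: (real^'n) measure)"
      using lborel_affine[of "-1" "x + c"] by (simp add: density_1)
    moreover have "(\<integral>\<^sup>+y. ennreal (mvn_density x S (x + c - y)) * indicator E (x + c - y) \<partial>lborel)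
        = (\<integral>\<^sup>+z. ennreal (mvn_density x S z) * indicator E z \<partial>distr lborel borel ((-) (x + c)))"
      by (simp add: nn_integral_distr)
    ultimately show ?thesis
      by simp
  qed
  also have "\<dots> = emeasure (mvn c S) ((\<lambda>y. x + c - y) -` E)"
  proof -
    have "(\<lambda>y. x + c - y) -` E \<in> sets borel"
      by (rule measurable_sets_borel[OF _ assms]) measurable
    then show ?thesis
      by (simp add: emeasure_mvn mvn_density_reflect indicator_def)
  qed
  finally show ?thesis .
qed

lemma borel_measurable_measure_mvn:
  assumes "E \<in> sets lebesgue"
  shows "(\<lambda>x. measure (mvn x S) E) \<in> borel_measurable borel"
proof -
  obtain B N N' where E: "E = B \<union> N" "N \<subseteq> N'" "N' \<in> null_sets lborel" and [measurable]: "B \<in> sets borel"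
    using sets_completionE[OF assms] by (metis sets_lborel)
  have "N \<in> null_sets lebesgue"
    using E by (meson null_sets_completionI null_sets_completion_subset)
  moreover have "B \<in> sets lebesgue"
    by (rule sets_completionI_sets) measurable
  ultimately have "measure (mvn x S) E = measure (mvn x S) B" for x
    unfolding E(1) by (intro measure_Un_null_set null_sets_mvn) simp_all
  moreover have "(\<lambda>x. enn2real (\<integral>\<^sup>+z. ennreal (mvn_density x S z) * indicator B z \<partial>lborel))
      \<in> borel_measurable borel"
    by (intro borel_measurable_enn2real lborel.borel_measurable_nn_integral) measurable
  ultimately show ?thesis
    by (simp add: measure_def emeasure_mvn)
qed

section \<open>Domination of a uniform variable\<close>

lemma (in real_distribution) measure_cdf_le:
  assumes noatom: "\<And>c. measure M {c} = 0" and "0 \<le> t"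
  shows "measure M {c. cdf M c \<le> t} \<le> t"
proof -
  let ?D = "{c. cdf M c \<le> t}"
  have "closed ?D"
    using noatom isCont_cdf by (intro closed_Collect_le continuous_at_imp_continuous_on) auto
  show ?thesis
  proof (cases "bdd_above ?D")
    case False
    have "cdf M c \<le> t" for c
    proof -
      obtain d where "d \<in> ?D" "c < d"
        using False by (metis bdd_above_def not_le)
      then show ?thesis
        using cdf_nondecreasing[of c d] by simp
    qed
    then have "1 \<le> t"
      by (intro tendsto_le[OF trivial_limit_at_top_linorder tendsto_const cdf_lim_at_top_prob]) simp
    then show ?thesis
      using prob_le_1[of ?D] by linarith
  next
    case True
    show ?thesis
    proof (cases "?D = {}")
      case False
      \<comment> \<open>a closed down-set bounded above is a ray {..s}\<close>
      have "Sup ?D \<in> ?D"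
        by (rule closed_contains_Sup) fact+
      moreover from this have "?D = {..Sup ?D}"
        using True cdf_nondecreasing by (auto intro: cSup_upper order_trans)
      ultimately show ?thesis
        by (metis cdf_def mem_Collect_eq)
    qed (use \<open>0 \<le> t\<close> in simp)
  qed
qed

context prob_space
begin

lemma prob_gt_ge_one_minus_if_dominates:
  fixes V P :: "'a \<Rightarrow> real"
  assumes [measurable]: "V \<in> borel_measurable M" "P \<in> borel_measurable M"
    and le: "\<And>x. x \<in> space M \<Longrightarrow> V x \<le> P x"
    and V: "prob {x \<in> space M. V x \<le> t} \<le> t"
  shows "1 - t \<le> prob {x \<in> space M. t < P x}"
proof -
  have "1 - t \<le> 1 - prob {x \<in> space M. V x \<le> t}"
    using V by simp
  also have "\<dots> = prob {x \<in> space M. t < V x}"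
  proof -
    have "space M - {x \<in> space M. V x \<le> t} = {x \<in> space M. t < V x}"
      by auto
    then show ?thesis
      using prob_compl[of "{x \<in> space M. V x \<le> t}"] by simp
  qed
  also have "\<dots> \<le> prob {x \<in> space M. t < P x}"
    using le by (intro finite_measure_mono) (auto intro: less_le_trans)
  finally show ?thesis .
qed

lemma ex_rational_between_not_null:
  fixes V P :: "'a \<Rightarrow> real"
  assumes [measurable]: "V \<in> borel_measurable M" "P \<in> borel_measurable M"
    and bounds: "\<And>x. x \<in> space M \<Longrightarrow> 0 \<le> V x \<and> V x < P x \<and> P x \<le> 1"
  shows "\<exists>u \<in> \<rat> \<inter> {0<..<1}. {x \<in> space M. V x < u \<and> u \<le> P x} \<notin> null_sets M"
proof (rule ccontr)
  let ?A = "\<lambda>u. {x \<in> space M. V x < u \<and> u \<le> P x}"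
  assume "\<not> ?thesis"
  then have "?A u \<in> null_sets M" if "u \<in> \<rat> \<inter> {0<..<1}" for u
    using that by blast
  with countable_Int1[OF countable_rat] have null: "(\<Union>u \<in> \<rat> \<inter> {0<..<1}. ?A u) \<in> null_sets M"
    by (rule null_sets_UN')
  have "space M \<subseteq> (\<Union>u \<in> \<rat> \<inter> {0<..<1}. ?A u)"
  proof
    fix x assume x: "x \<in> space M"
    from bounds[OF x] have "0 \<le> V x" "V x < P x" "P x \<le> 1"
      by simp_all
    then obtain r where r: "r \<in> \<rat>" "V x < r" "r < P x"
      using Rats_dense_in_real by blast
    then have "r \<in> \<rat> \<inter> {0<..<1}"
      using \<open>0 \<le> V x\<close> \<open>P x \<le> 1\<close> by simp
    moreover have "x \<in> ?A r"
      using x r by simp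
    ultimately show "x \<in> (\<Union>u \<in> \<rat> \<inter> {0<..<1}. ?A u)"
      by blast
  qed
  then have "emeasure M (space M) \<le> emeasure M (\<Union>u \<in> \<rat> \<inter> {0<..<1}. ?A u)"
    using null by (intro emeasure_mono) auto
  also have "\<dots> = 0"
    using null by (rule null_setsD1)
  finally show False
    by (simp add: emeasure_space_1)
qed

lemma ex_prob_ge_one_minus_gt_if_strictly_dominates:
  fixes V P :: "'a \<Rightarrow> real"
  assumes [measurable]: "V \<in> borel_measurable M" "P \<in> borel_measurable M"
    and bounds: "\<And>x. x \<in> space M \<Longrightarrow> 0 \<le> V x \<and> V x < P x \<and> P x \<le> 1"
    and V: "\<And>t. 0 \<le> t \<Longrightarrow> prob {x \<in> space M. V x \<le> t} \<le> t"
  shows "\<exists>a. 0 < a \<and> a < 1 \<and> a < prob {x \<in> space M. 1 - a \<le> P x}"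
proof -
  let ?A = "\<lambda>u. {x \<in> space M. V x < u \<and> u \<le> P x}"
  obtain u where u: "u \<in> \<rat> \<inter> {0<..<1}" and "?A u \<notin> null_sets M"
    using ex_rational_between_not_null[OF assms(1-3)] by blast
  then have "0 < prob (?A u)"
    by (auto simp: null_sets_def emeasure_eq_measure zero_less_measure_iff)
  have "prob {x \<in> space M. V x < u} \<le> prob {x \<in> space M. V x \<le> u}"
    by (intro finite_measure_mono) auto
  also have "\<dots> \<le> u"
    using V u by simp
  finally have "1 - u \<le> 1 - prob {x \<in> space M. V x < u}"
    by simp
  also have "\<dots> = prob {x \<in> space M. u \<le> V x}"
  proof -
    have "space M - {x \<in> space M. V x < u} = {x \<in> space M. u \<le> V x}"
      by auto
    then show ?thesis
      using prob_compl[of "{x \<in> space M. V x < u}"] by simp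
  qed
  also have "\<dots> < prob {x \<in> space M. u \<le> V x} + prob (?A u)"
    using \<open>0 < prob (?A u)\<close> by simp
  also have "\<dots> = prob ({x \<in> space M. u \<le> V x} \<union> ?A u)"
    by (intro finite_measure_Union[symmetric]) auto
  also have "\<dots> \<le> prob {x \<in> space M. u \<le> P x}"
    using bounds by (intro finite_measure_mono) (auto intro: order_trans less_imp_le)
  finally show ?thesis
    using u by (intro exI[of _ "1 - u"]) auto
qed

end

lemma real_distribution_distr_mvn_inner:
  assumes "sym_posdef S"
  shows "real_distribution (distr (mvn c S) borel (\<lambda>y. g \<bullet> y))"
proof -
  interpret prob_space "mvn c S"
    using prob_space_mvn[OF assms] .
  have "prob_space (distr (mvn c S) borel (\<lambda>y. g \<bullet> y))"
    by (rule prob_space_distr) (simp add: measurable_completion)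
  then show ?thesis
    by (simp add: real_distribution_def real_distribution_axioms_def)
qed

lemma measure_distr_mvn_inner:
  assumes "A \<in> sets borel"
  shows "measure (distr (mvn c S) borel (\<lambda>y. g \<bullet> y)) A = measure (mvn c S) {y. g \<bullet> y \<in> A}"
  using assms by (simp add: measure_distr measurable_completion vimage_def)

lemma measure_distr_mvn_inner_singleton:
  assumes "g \<noteq> 0"
  shows "measure (distr (mvn c S) borel (\<lambda>y. g \<bullet> y)) {r} = 0"
proof -
  have "{y. g \<bullet> y = r} \<in> null_sets lebesgue"
    using negligible_hyperplane[of g r] assms by (simp add: negligible_iff_null_sets)
  then show ?thesis
    by (simp add: measure_distr_mvn_inner null_sets_mvn measure_eq_0_null_sets)
qed

(* The point symmetry of the normal density (emeasure_mvn_reflect) turns the posterior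
   probability of the half-space at x into the sampling probability of {y. g \<bullet> y < g \<bullet> x}. *)
lemma measure_mvn_halfspace_eq_cdf:
  fixes S :: "real^'n^'n" and Th g :: "real^'n"
  assumes "sym_posdef S" and "g \<noteq> 0"
  shows "measure (mvn x S) {y. 0 < g \<bullet> (y - Th)} = cdf (distr (mvn Th S) borel (\<lambda>y. g \<bullet> y)) (g \<bullet> x)"
proof -
  let ?N = "distr (mvn Th S) borel (\<lambda>y. g \<bullet> y)"
  interpret N: real_distribution ?N
    using real_distribution_distr_mvn_inner[OF assms(1)] .
  have "(\<lambda>y. x + Th - y) -` {y. 0 < g \<bullet> (y - Th)} = {y. g \<bullet> y \<in> {..< g \<bullet> x}}"
    by (auto simp: inner_diff_right inner_add_right)
  then have "measure (mvn x S) {y. 0 < g \<bullet> (y - Th)} = measure (mvn Th S) {y. g \<bullet> y \<in> {..< g \<bullet> x}}"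
    using emeasure_mvn_reflect[of "{y. 0 < g \<bullet> (y - Th)}" x S Th] by (simp add: measure_def)
  also have "\<dots> = measure ?N {..< g \<bullet> x} + measure ?N {g \<bullet> x}"
    by (simp add: measure_distr_mvn_inner measure_distr_mvn_inner_singleton[OF assms(2)])
  also have "\<dots> = measure ?N ({..< g \<bullet> x} \<union> {g \<bullet> x})"
    by (rule N.finite_measure_Union[symmetric]) auto
  also have "{..< g \<bullet> x} \<union> {g \<bullet> x} = {.. g \<bullet> x}"
    by auto
  finally show ?thesis
    by (simp add: cdf_def)
qed

lemma measure_mvn_halfspace_posterior_le:
  fixes S :: "real^'n^'n" and Th g :: "real^'n"
  assumes "sym_posdef S" and "g \<noteq> 0" and "0 \<le> t"
  shows "measure (mvn Th S) {x. measure (mvn x S) {y. 0 < g \<bullet> (y - Th)} \<le> t} \<le> t"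
proof -
  let ?N = "distr (mvn Th S) borel (\<lambda>y. g \<bullet> y)"
  interpret N: real_distribution ?N
    using real_distribution_distr_mvn_inner[OF assms(1)] .
  have "mono (cdf ?N)"
    by (rule monoI) (rule N.cdf_nondecreasing)
  then have "{r. cdf ?N r \<le> t} \<in> sets borel"
    using borel_measurable_mono by measurable
  then have "measure (mvn Th S) {x. measure (mvn x S) {y. 0 < g \<bullet> (y - Th)} \<le> t}
      = measure ?N {r. cdf ?N r \<le> t}"
    by (simp add: measure_mvn_halfspace_eq_cdf[OF assms(1,2)] measure_distr_mvn_inner)
  also have "\<dots> \<le> t"
    using measure_distr_mvn_inner_singleton[OF assms(2)] assms(3) by (rule N.measure_cdf_le)
  finally show ?thesis .
qed

theorem proposition1:
  fixes S :: "real^'n^'n" and Th :: "real^'n" and G :: "(real^'n) set"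
  assumes "sym_posdef S"
    and "G \<in> sets lebesgue"
    and "noloco G Th"
  shows "false_confidence S Th (- G) \<and>
         (\<forall>t::real. 0 \<le> t \<and> t \<le> 1 \<longrightarrow>
            measure (mvn Th S) {x. measure (mvn x S) (- G) > t} \<ge> 1 - t)"
proof -
  obtain g where "Th \<in> G" "g \<noteq> 0" and G: "G \<subseteq> {y. g \<bullet> (y - Th) \<le> 0}"
    and gap: "0 < emeasure lebesgue (- G \<inter> {y. g \<bullet> (y - Th) \<le> 0})"
    using assms(3) by (auto simp: noloco_def)
  interpret prob_space "mvn Th S"
    using prob_space_mvn[OF assms(1)] .
  define H where "H = {y. 0 < g \<bullet> (y - Th)}"
  define V where "V x = measure (mvn x S) H" for x
  define P where "P x = measure (mvn x S) (- G)" for x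
  have "- G \<in> sets lebesgue"
    using sets.compl_sets[OF assms(2)] by (simp add: Compl_eq_Diff_UNIV)
  moreover have "H \<in> sets lebesgue"
    unfolding H_def by (intro sets_completionI_sets) measurable
  ultimately have measurable: "V \<in> borel_measurable (mvn Th S)" "P \<in> borel_measurable (mvn Th S)"
    unfolding V_def P_def by (simp_all add: measurable_completion borel_measurable_measure_mvn)
  have "- G - H = - G \<inter> {y. g \<bullet> (y - Th) \<le> 0}"
    by (auto simp: H_def)
  then have "V x < P x" for x
    unfolding V_def P_def using G gap assms(1) \<open>- G \<in> sets lebesgue\<close> \<open>H \<in> sets lebesgue\<close>
    by (intro measure_mvn_strict_mono) (auto simp: H_def)
  moreover have "0 \<le> V x" "P x \<le> 1" for x
    using prob_space.prob_le_1[OF prob_space_mvn[OF assms(1)]] by (simp_all add: V_def P_def)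
  moreover have "prob {x \<in> space (mvn Th S). V x \<le> t} \<le> t" if "0 \<le> t" for t
    using measure_mvn_halfspace_posterior_le[OF assms(1) \<open>g \<noteq> 0\<close> that] by (simp add: V_def H_def)
  ultimately show ?thesis
    using measurable \<open>Th \<in> G\<close> ex_prob_ge_one_minus_gt_if_strictly_dominates[of V P]
      prob_gt_ge_one_minus_if_dominates[of V P]
    by (auto simp: false_confidence_def P_def less_imp_le)
qed

end
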